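(* Let $a_2,a_3$ be integers with $1<a_2<a_3$, $A=\{1,a_2,a_3\}$, and let $h$ be a positive integer with $X(h)\ge a_3$. Write $X(h)=(k+1)a_3+Y$ with integers $k$ and $0\le Y<a_3$. Then $Y<a_3-1$, $k\ge 0$, and there is an integer $p$ with $0\le p\le k$ such that $SG(A,h-k,p)$ is a stride generator; moreover $y=Y+1$ is a break of $SG(A,h-k,p)$ which is either canonical or has break order $>k+1$.
   Context: An integer $x$ has an $h$-representation if $x=c_3a_3+c_2a_2+c_1$ with integers $c_1,c_2,c_3\ge0$ and $c_1+c_2+c_3\le h$. $X(h)$ is one less than the smallest positive integer with no $h$-representation. For integers $n$ and $i\ge 0$, an integer $x$ has an $n$-generation of order $i$ if there are integers $c_1,c_2\ge 0$ with $x+ia_3=c_2a_2+c_1$ and $c_1+c_2\le n+i$. For integers $n$ and $p\ge0$, $SG(A,n,p)$ is a stride generator if: (A) every integer $0\le x<a_3$ has an $n$-generation of some order $\le p$; (B) at least one integer $0\le x<a_3$ has no $n$-generation of order $<p$; (C) at least one integer $0\le y<a_3$ has no $(n-1)$-generation of any order $\le p+1$. Any $0\le y<a_3$ satisfying (C) is called a break. A break $y$ is canonical if there is no integer $j\ge 0$ with $y+ja_3=c_2a_2+c_1$, $c_1,c_2\ge 0$, $c_1+c_2\le (n-1)+j$; otherwise its break order is the smallest such $j$. *)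

theory Defs
  imports Main
begin

text \<open>A = {1, a2, a3}. All integers are of type int; coefficients and orders are nat (i.e. \<ge> 0).\<close>

definition hrep :: "int \<Rightarrow> int \<Rightarrow> int \<Rightarrow> int \<Rightarrow> bool" where
  "hrep a2 a3 h x \<longleftrightarrow> (\<exists>c1 c2 c3 :: nat.
      x = int c3 * a3 + int c2 * a2 + int c1 \<and> int (c1 + c2 + c3) \<le> h)"

definition Xh :: "int \<Rightarrow> int \<Rightarrow> int \<Rightarrow> int" where
  "Xh a2 a3 h = int (LEAST m :: nat. m > 0 \<and> \<not> hrep a2 a3 h (int m)) - 1"

definition ngen :: "int \<Rightarrow> int \<Rightarrow> int \<Rightarrow> nat \<Rightarrow> int \<Rightarrow> bool" where
  "ngen a2 a3 n i x \<longleftrightarrow> (\<exists>c1 c2 :: nat.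
      x + int i * a3 = int c2 * a2 + int c1 \<and> int (c1 + c2) \<le> n + int i)"

definition is_break :: "int \<Rightarrow> int \<Rightarrow> int \<Rightarrow> nat \<Rightarrow> int \<Rightarrow> bool" where
  "is_break a2 a3 n p y \<longleftrightarrow> 0 \<le> y \<and> y < a3 \<and> \<not> (\<exists>i \<le> p + 1. ngen a2 a3 (n - 1) i y)"

definition stride_generator :: "int \<Rightarrow> int \<Rightarrow> int \<Rightarrow> nat \<Rightarrow> bool" where
  "stride_generator a2 a3 n p \<longleftrightarrow>
     (\<forall>x. 0 \<le> x \<and> x < a3 \<longrightarrow> (\<exists>i \<le> p. ngen a2 a3 n i x)) \<and>
     (\<exists>x. 0 \<le> x \<and> x < a3 \<and> \<not> (\<exists>i < p. ngen a2 a3 n i x)) \<and>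
     (\<exists>y. is_break a2 a3 n p y)"

definition canonical_break :: "int \<Rightarrow> int \<Rightarrow> int \<Rightarrow> nat \<Rightarrow> int \<Rightarrow> bool" where
  "canonical_break a2 a3 n p y \<longleftrightarrow> is_break a2 a3 n p y \<and> \<not> (\<exists>j. ngen a2 a3 (n - 1) j y)"

definition break_order :: "int \<Rightarrow> int \<Rightarrow> int \<Rightarrow> int \<Rightarrow> nat" where
  "break_order a2 a3 n y = (LEAST j. ngen a2 a3 (n - 1) j y)"

end

theory Submission
  imports Defs
begin

text \<open>Splitting off the largest multiple of \<open>a3\<close>, an \<open>h\<close>-representation of \<open>x + m a3\<close>
  (with \<open>0 \<le> x < a3\<close>) uses at most \<open>m\<close> copies of \<open>a3\<close>; the copies left unused are exactly
  the order of an \<open>(h - m)\<close>-generation of \<open>x\<close>. Hence all residues have generations of order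
  \<open>\<le> k\<close> because everything up to \<open>X(h)\<close> is representable, while \<open>X(h) + 1 = (k+1) a3 + Y + 1\<close>
  being unrepresentable says that \<open>Y + 1\<close> has no \<open>(h-k-1)\<close>-generation of order \<open>\<le> k + 1\<close>.
  The least order covering all residues then yields the stride generator. Finally
  \<open>Y = a3 - 1\<close> is impossible: \<open>X(h) \<le> h a3\<close> forces \<open>k + 2 \<le> h\<close>, so \<open>X(h) + 1 = (k+2) a3\<close>
  would be representable.\<close>

lemma hrep_le_mult:
  assumes "a2 \<le> a3" "1 \<le> a3" "hrep a2 a3 h x"
  shows "x \<le> h * a3"
proof -
  obtain c1 c2 c3 :: nat where x: "x = int c3 * a3 + int c2 * a2 + int c1"
    and s: "int (c1 + c2 + c3) \<le> h" using assms(3) unfolding hrep_def by blast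
  have "int c2 * a2 \<le> int c2 * a3" using assms(1) by (simp add: mult_left_mono)
  moreover have "int c1 \<le> int c1 * a3" using assms(2) mult_left_mono[of 1 a3 "int c1"] by simp
  moreover have "int (c1 + c2 + c3) * a3 \<le> h * a3" using s assms(2) by (simp add: mult_right_mono)
  ultimately show ?thesis unfolding x by (simp add: algebra_simps)
qed

lemma hrep_mult_a3:
  assumes "0 \<le> c" "c \<le> h"
  shows "hrep a2 a3 h (c * a3)"
  unfolding hrep_def using assms
  by (intro exI[of _ 0] exI[of _ "nat c"]) simp

lemma exists_pos_not_hrep:
  assumes "a2 \<le> a3" "1 \<le> a3"
  shows "\<exists>m::nat. m > 0 \<and> \<not> hrep a2 a3 h (int m)"
proof -
  have "int (nat (h * a3) + 1) > h * a3" by linarith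
  then show ?thesis using hrep_le_mult[OF assms] by (intro exI[of _ "nat (h * a3) + 1"]) force
qed

lemma not_hrep_Xh_plus_one:
  assumes "a2 \<le> a3" "1 \<le> a3"
  shows "\<not> hrep a2 a3 h (Xh a2 a3 h + 1)"
  using LeastI_ex[OF exists_pos_not_hrep[OF assms]] unfolding Xh_def by simp

lemma Xh_nonneg: "a2 \<le> a3 \<Longrightarrow> 1 \<le> a3 \<Longrightarrow> 0 \<le> Xh a2 a3 h"
  using LeastI_ex[OF exists_pos_not_hrep] unfolding Xh_def by fastforce

lemma Xh_le_mult:
  assumes "a2 \<le> a3" "1 \<le> a3" "0 \<le> h"
  shows "Xh a2 a3 h \<le> h * a3"
proof -
  have "(LEAST m :: nat. m > 0 \<and> \<not> hrep a2 a3 h (int m)) \<le> nat (h * a3) + 1"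
    using hrep_le_mult[OF assms(1,2)] by (intro Least_le) force
  moreover have "0 \<le> h * a3" using assms by simp
  ultimately show ?thesis unfolding Xh_def by linarith
qed

lemma hrep_of_le_Xh:
  assumes "0 \<le> h" "0 \<le> t" "t \<le> Xh a2 a3 h"
  shows "hrep a2 a3 h t"
proof (cases "t = 0")
  case True
  then show ?thesis using hrep_mult_a3[of 0 h] assms(1) by simp
next
  case False
  then have "nat t < (LEAST m :: nat. m > 0 \<and> \<not> hrep a2 a3 h (int m))"
    using assms(2,3) unfolding Xh_def by linarith
  then show ?thesis using not_less_Least False assms(2) by fastforce
qed

lemma Xh_plus_one_ne_mult:
  assumes "a2 \<le> a3" "1 < a3" "0 \<le> h"
  shows "Xh a2 a3 h + 1 \<noteq> c * a3"
proof
  assume c: "Xh a2 a3 h + 1 = c * a3"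
  have "0 < c * a3" using c Xh_nonneg[of a2 a3 h] assms by simp
  then have "0 \<le> c" using assms(2) zero_less_mult_pos2 by fastforce
  have "c * a3 < (h + 1) * a3"
    using c Xh_le_mult[of a2 a3 h] assms by (simp add: algebra_simps)
  then have "c \<le> h" using assms(2) by (simp add: mult_less_cancel_right)
  then show False
    using hrep_mult_a3[OF \<open>0 \<le> c\<close>] not_hrep_Xh_plus_one[of a2 a3 h] c assms by fastforce
qed

lemma hrep_shift_iff_ngen:
  assumes "0 \<le> x" "x < a3" "0 \<le> a2"
  shows "hrep a2 a3 h (x + int m * a3) \<longleftrightarrow> (\<exists>i\<le>m. ngen a2 a3 (h - int m) i x)"
proof
  assume "hrep a2 a3 h (x + int m * a3)"
  then obtain c1 c2 c3 :: nat where e: "x + int m * a3 = int c3 * a3 + int c2 * a2 + int c1"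
    and s: "int (c1 + c2 + c3) \<le> h" unfolding hrep_def by blast
  have "0 \<le> int c2 * a2" using assms(3) by simp
  then have "int c3 * a3 < int m * a3 + a3" using e assms(1,2) by linarith
  then have "int c3 * a3 < (int m + 1) * a3" by (simp add: algebra_simps)
  then have c3: "c3 \<le> m" using assms by (simp add: mult_less_cancel_right)
  have "x + int (m - c3) * a3 = int c2 * a2 + int c1"
    using e c3 by (simp add: algebra_simps of_nat_diff)
  moreover have "int (c1 + c2) \<le> h - int m + int (m - c3)" using s c3 by simp
  ultimately show "\<exists>i\<le>m. ngen a2 a3 (h - int m) i x"
    unfolding ngen_def by (intro exI[of _ "m - c3"]) auto
next
  assume "\<exists>i\<le>m. ngen a2 a3 (h - int m) i x"
  then obtain i c1 c2 :: nat where "i \<le> m" and e: "x + int i * a3 = int c2 * a2 + int c1"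
    and s: "int (c1 + c2) \<le> h - int m + int i" unfolding ngen_def by blast
  have "x + int m * a3 = int (m - i) * a3 + int c2 * a2 + int c1"
    using e \<open>i \<le> m\<close> by (simp add: algebra_simps of_nat_diff)
  moreover have "int (c1 + c2 + (m - i)) \<le> h" using s \<open>i \<le> m\<close> by simp
  ultimately show "hrep a2 a3 h (x + int m * a3)" unfolding hrep_def by blast
qed

definition covers :: "int \<Rightarrow> int \<Rightarrow> int \<Rightarrow> nat \<Rightarrow> bool" where
  "covers a2 a3 n p \<longleftrightarrow> (\<forall>x. 0 \<le> x \<and> x < a3 \<longrightarrow> (\<exists>i \<le> p. ngen a2 a3 n i x))"

lemma exists_stride_generator:
  assumes cov: "covers a2 a3 n m" and y: "0 \<le> y" "y < a3"
    and no_gen: "\<forall>i \<le> m + 1. \<not> ngen a2 a3 (n - 1) i y"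
  shows "\<exists>p \<le> m. stride_generator a2 a3 n p \<and> is_break a2 a3 n p y"
proof -
  define p where "p = (LEAST p. covers a2 a3 n p)"
  have "covers a2 a3 n p" unfolding p_def using cov by (rule LeastI)
  moreover have "p \<le> m" unfolding p_def using cov by (rule Least_le)
  moreover have "\<exists>x. 0 \<le> x \<and> x < a3 \<and> \<not> (\<exists>i<p. ngen a2 a3 n i x)"
  proof (cases "p = 0")
    case True
    then show ?thesis using y by auto
  next
    case False
    then have "p - 1 < p" by simp
    then have "\<not> covers a2 a3 n (p - 1)" unfolding p_def by (rule not_less_Least)
    moreover have "\<And>i. i < p \<longleftrightarrow> i \<le> p - 1" using False by auto
    ultimately show ?thesis unfolding covers_def by auto
  qed
  moreover have "is_break a2 a3 n p y"
    unfolding is_break_def using y no_gen \<open>p \<le> m\<close> by auto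
  ultimately show ?thesis unfolding stride_generator_def covers_def by blast
qed

lemma canonical_or_late_break:
  assumes "is_break a2 a3 n p y" "\<forall>i \<le> m. \<not> ngen a2 a3 (n - 1) i y"
  shows "canonical_break a2 a3 n p y \<or>
    ((\<exists>j. ngen a2 a3 (n - 1) j y) \<and> m < break_order a2 a3 n y)"
  using LeastI_ex[of "\<lambda>j. ngen a2 a3 (n - 1) j y"] assms
  unfolding canonical_break_def break_order_def by (meson not_le)

theorem lemma11:
  fixes a2 a3 h k Y :: int
  assumes "1 < a2" and "a2 < a3" and "0 < h"
    and "Xh a2 a3 h \<ge> a3"
    and "Xh a2 a3 h = (k + 1) * a3 + Y" and "0 \<le> Y" and "Y < a3"
  shows "Y < a3 - 1 \<and> k \<ge> 0 \<and>
    (\<exists>p :: nat. int p \<le> k \<and> stride_generator a2 a3 (h - k) p \<and>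
       is_break a2 a3 (h - k) p (Y + 1) \<and>
       (canonical_break a2 a3 (h - k) p (Y + 1) \<or>
        ((\<exists>j. ngen a2 a3 (h - k - 1) j (Y + 1)) \<and>
         int (break_order a2 a3 (h - k) (Y + 1)) > k + 1)))"
proof -
  have "0 < (k + 1) * a3" using assms by simp
  then have "0 < k + 1" using assms zero_less_mult_pos2[of "k + 1" a3] by simp
  then have k: "k \<ge> 0" by simp
  have Y: "Y < a3 - 1"
    using Xh_plus_one_ne_mult[of a2 a3 h "k + 2"] assms by (fastforce simp: algebra_simps)
  have cover: "covers a2 a3 (h - k) (nat k)"
    unfolding covers_def
    using hrep_of_le_Xh[of h] hrep_shift_iff_ngen[of _ a3 a2 h "nat k"] assms k
    by (simp add: algebra_simps)
  have no_gen: "\<forall>i \<le> nat k + 1. \<not> ngen a2 a3 (h - k - 1) i (Y + 1)"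
    using hrep_shift_iff_ngen[of "Y + 1" a3 a2 h "nat k + 1"] not_hrep_Xh_plus_one[of a2 a3 h]
      assms Y k by (auto simp: algebra_simps)
  obtain p where "p \<le> nat k" and sg: "stride_generator a2 a3 (h - k) p"
    and br: "is_break a2 a3 (h - k) p (Y + 1)"
    using exists_stride_generator[OF cover _ _ no_gen] assms(6) Y by auto
  have "canonical_break a2 a3 (h - k) p (Y + 1) \<or>
      ((\<exists>j. ngen a2 a3 (h - k - 1) j (Y + 1)) \<and> int (break_order a2 a3 (h - k) (Y + 1)) > k + 1)"
    using canonical_or_late_break[OF br no_gen] k by auto
  moreover have "int p \<le> k" using \<open>p \<le> nat k\<close> k by linarith
  ultimately show ?thesis using Y k sg br by blast
qed

end
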